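(* Let $\lambda>0$ and $f:\mathbb{R}^n\to\mathbb{R}$ be twice continuously differentiable. Suppose there exist sequences $\{\varepsilon_g^k\}\downarrow0$, $\{\varepsilon_h^k\}\downarrow0$, a sequence $\{w^k\}\to w^*$, and a sequence $\{t_k\}\subseteq[t_{\min},t_{\max}]$ with $0<t_{\min}\le t_{\max}<+\infty$, such that for each $k$, $w^k$ is a strong $(\varepsilon_g^k,\varepsilon_h^k)$-2o point with respect to $t_k$, i.e. $\|\mathcal{G}_{t_k}(w^k)\|\le\varepsilon_g^k$ and $\lambda_{\min}((\nabla^2f(w^k))_{I^k_{\neq0}})\ge-\varepsilon_h^k$, where $I^k_{\neq0}=\{i:w^k_i\neq0\}$. Then $w^*$ satisfies $0\in\nabla f(w^* )+\lambda\partial\|w^*\|_1$ and $z^\top\nabla^2f(w^* )z\ge0$ for all $z\in\mathcal{C}(w^* )=\{z:z_i=0\text{ if }w^*_i=0\}$.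
   Context: $\mathcal{G}_t(x):=t(x-\mathrm{prox}_{\frac\lambda t\|\cdot\|_1}(x-\frac1t\nabla f(x)))$, where $\mathrm{prox}_h(z)=\arg\min_x\{h(x)+\frac12\|x-z\|^2\}$. For a symmetric matrix $A$ and index set $J$, $A_J$ is the principal submatrix indexed by $J$. *)

theory Defs
  imports "HOL-Analysis.Analysis"
begin

definition l1norm :: "real^'n \<Rightarrow> real" where
  "l1norm x = (\<Sum>i\<in>UNIV. \<bar>x $ i\<bar>)"

definition prox :: "(real^'n \<Rightarrow> real) \<Rightarrow> real^'n \<Rightarrow> real^'n" where
  "prox h z = (SOME x. \<forall>y. h x + (1/2) * (norm (x - z))\<^sup>2 \<le> h y + (1/2) * (norm (y - z))\<^sup>2)"

definition prox_grad_map ::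
  "(real^'n \<Rightarrow> real^'n) \<Rightarrow> real \<Rightarrow> real \<Rightarrow> real^'n \<Rightarrow> real^'n" where
  "prox_grad_map grad lam t x =
     t *\<^sub>R (x - prox (\<lambda>y. (lam / t) * l1norm y) (x - (1 / t) *\<^sub>R grad x))"

text \<open>Eigenvalues of the principal submatrix A_J (vectors supported on J).\<close>
definition principal_eigenvalues :: "real^'n^'n \<Rightarrow> 'n set \<Rightarrow> real set" where
  "principal_eigenvalues A J =
     {\<mu>. \<exists>v. v \<noteq> 0 \<and> (\<forall>i. i \<notin> J \<longrightarrow> v $ i = 0) \<and>
           (\<forall>i\<in>J. (A *v v) $ i = \<mu> * v $ i)}"

definition lambda_min :: "real^'n^'n \<Rightarrow> 'n set \<Rightarrow> real" where
  "lambda_min A J = Min (principal_eigenvalues A J)"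

definition support :: "real^'n \<Rightarrow> 'n set" where
  "support w = {i. w $ i \<noteq> 0}"

definition subdiff_l1 :: "real^'n \<Rightarrow> (real^'n) set" where
  "subdiff_l1 w = {s. \<forall>y. l1norm y \<ge> l1norm w + s \<bullet> (y - w)}"

definition critical_cone :: "real^'n \<Rightarrow> (real^'n) set" where
  "critical_cone w = {z. \<forall>i. w $ i = 0 \<longrightarrow> z $ i = 0}"

end

theory Submission
  imports Defs
begin

(* Since G_t(w) = t (w - p) with p the prox point, the optimality condition of the prox says
   that (G_t(w) - grad f(w)) / lam is an l1-subgradient at p. Along the sequence G_k tends to 0
   and t_k >= t_min, so p_k tends to wstar, and closedness of the graph of the l1-subdifferential
   yields -grad f(wstar) / lam in the subdifferential at wstar.
   For the second-order part, eventually supp wstar is contained in supp w_k, so every z in the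
   critical cone is supported on I_k. The Hessian is symmetric (Schwarz's theorem, obtained
   from the limit of symmetric second differences), so the smallest eigenvalue of a principal
   submatrix bounds the quadratic form from below: z' H(w_k) z >= -eh_k |z|^2, and the
   continuity of the Hessian passes this to the limit. *)

definition second_difference :: "('a::real_vector \<Rightarrow> real) \<Rightarrow> 'a \<Rightarrow> 'a \<Rightarrow> 'a \<Rightarrow> real \<Rightarrow> real" where
  "second_difference f x u v h = f (x + h *\<^sub>R u + h *\<^sub>R v) - f (x + h *\<^sub>R u) - f (x + h *\<^sub>R v) + f x"

lemma second_difference_commute: "second_difference f x u v h = second_difference f x v u h"
  by (simp add: second_difference_def algebra_simps)

lemma second_difference_mean_value:
  fixes f :: "real^'n \<Rightarrow> real"
  assumes fderiv: "\<And>x. (f has_derivative (\<lambda>h. grad x \<bullet> h)) (at x)"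
    and h: "0 < h"
  obtains \<xi> where "0 < \<xi>" "\<xi> < h"
    and "second_difference f x u v h =
         h * ((grad (x + \<xi> *\<^sub>R u + h *\<^sub>R v) - grad (x + \<xi> *\<^sub>R u)) \<bullet> u)"
proof -
  have line: "((\<lambda>t. f (y + t *\<^sub>R u)) has_real_derivative grad (y + t *\<^sub>R u) \<bullet> u) (at t)" for y t
  proof -
    have "((\<lambda>t. y + t *\<^sub>R u) has_derivative (\<lambda>s. s *\<^sub>R u)) (at t)"
      by (auto intro!: derivative_eq_intros)
    from has_derivative_compose[OF this fderiv] show ?thesis
      by (simp add: has_field_derivative_def o_def mult_commute_abs)
  qed
  define \<phi> where "\<phi> t = f (x + h *\<^sub>R v + t *\<^sub>R u) - f (x + t *\<^sub>R u)" for t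
  define \<phi>' where "\<phi>' t = grad (x + h *\<^sub>R v + t *\<^sub>R u) \<bullet> u - grad (x + t *\<^sub>R u) \<bullet> u" for t
  have "(\<phi> has_real_derivative \<phi>' t) (at t)" for t
    unfolding \<phi>_def \<phi>'_def by (intro DERIV_diff line)
  then obtain \<xi> where "0 < \<xi>" "\<xi> < h" "\<phi> h - \<phi> 0 = h * \<phi>' \<xi>"
    using MVT2[OF h, of \<phi> \<phi>'] by auto
  then show ?thesis
    by (intro that) (auto simp: second_difference_def \<phi>_def \<phi>'_def algebra_simps inner_diff_left)
qed

lemma second_difference_estimate:
  fixes f :: "real^'n \<Rightarrow> real"
  assumes fderiv: "\<And>x. (f has_derivative (\<lambda>h. grad x \<bullet> h)) (at x)"
    and remainder: "\<And>y. norm y < d \<Longrightarrow> norm (grad (x + y) - grad x - H *v y) \<le> e * norm y"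
    and "0 \<le> e" "0 < h" "h * (norm u + norm v) < d"
  shows "\<bar>second_difference f x u v h / h\<^sup>2 - u \<bullet> (H *v v)\<bar>
           \<le> e * (norm u * (2 * norm u + norm v))"
    (is "\<bar>?Q - _\<bar> \<le> _")
proof -
  define r where "r y = grad (x + y) - grad x - H *v y" for y
  obtain \<xi> where "0 < \<xi>" "\<xi> < h"
    and mv: "second_difference f x u v h = h * ((grad (x + \<xi> *\<^sub>R u + h *\<^sub>R v) - grad (x + \<xi> *\<^sub>R u)) \<bullet> u)"
    using second_difference_mean_value[OF fderiv \<open>0 < h\<close>] by blast
  define y1 where "y1 = \<xi> *\<^sub>R u + h *\<^sub>R v"
  define y2 where "y2 = \<xi> *\<^sub>R u"
  have y1: "norm y1 \<le> h * (norm u + norm v)"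
    using norm_triangle_ineq[of "\<xi> *\<^sub>R u" "h *\<^sub>R v"] \<open>0 < \<xi>\<close> \<open>\<xi> < h\<close>
      mult_right_mono[of \<xi> h "norm u"]
    by (simp add: y1_def distrib_left)
  have y2: "norm y2 \<le> h * norm u"
    using \<open>0 < \<xi>\<close> \<open>\<xi> < h\<close> by (simp add: y2_def mult_right_mono)
  have r1: "norm (r y1) \<le> e * norm y1" and r2: "norm (r y2) \<le> e * norm y2"
    unfolding r_def using y1 y2 \<open>0 < h\<close> \<open>h * (norm u + norm v) < d\<close>
    by (intro remainder; smt (verit) mult_left_mono norm_ge_zero)+
  have "grad (x + \<xi> *\<^sub>R u + h *\<^sub>R v) - grad (x + \<xi> *\<^sub>R u) = r y1 - r y2 + h *\<^sub>R (H *v v)"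
    by (simp add: r_def y1_def y2_def add.assoc matrix_vector_right_distrib matrix_vector_mult_scaleR)
  then have "(grad (x + \<xi> *\<^sub>R u + h *\<^sub>R v) - grad (x + \<xi> *\<^sub>R u)) \<bullet> u
      = u \<bullet> (r y1 - r y2) + h * (u \<bullet> (H *v v))"
    by (simp add: inner_commute inner_add_right)
  with mv \<open>0 < h\<close> have "?Q - u \<bullet> (H *v v) = (u \<bullet> (r y1 - r y2)) / h"
    by (simp add: power2_eq_square field_simps)
  moreover have "\<bar>u \<bullet> (r y1 - r y2)\<bar> \<le> h * (e * (norm u * (2 * norm u + norm v)))"
  proof -
    have "\<bar>u \<bullet> (r y1 - r y2)\<bar> \<le> norm u * (norm (r y1) + norm (r y2))"
      by (intro order.trans[OF Cauchy_Schwarz_ineq2] mult_left_mono norm_triangle_ineq4) auto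
    also have "\<dots> \<le> norm u * (e * (h * (norm u + norm v)) + e * (h * norm u))"
      using r1 r2 y1 y2 \<open>0 \<le> e\<close>
      by (intro mult_left_mono add_mono) (auto intro: order.trans mult_left_mono)
    also have "\<dots> = h * (e * (norm u * (2 * norm u + norm v)))" by (simp add: algebra_simps)
    finally show ?thesis .
  qed
  ultimately show ?thesis
    using \<open>0 < h\<close> by (simp add: abs_div divide_le_eq mult.commute)
qed

lemma second_difference_tendsto:
  fixes f :: "real^'n \<Rightarrow> real"
  assumes fderiv: "\<And>x. (f has_derivative (\<lambda>h. grad x \<bullet> h)) (at x)"
    and gderiv: "(grad has_derivative (\<lambda>h. H *v h)) (at x)"
  shows "((\<lambda>h. second_difference f x u v h / h\<^sup>2) \<longlongrightarrow> u \<bullet> (H *v v)) (at_right 0)"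
  unfolding tendsto_iff eventually_at_right_field dist_real_def
proof (intro allI impI)
  fix \<epsilon> :: real assume "\<epsilon> > 0"
  define A where "A = norm u * (2 * norm u + norm v)"
  have "A \<ge> 0" by (simp add: A_def)
  define e where "e = \<epsilon> / (A + 1)"
  have "e > 0" and "e * A < \<epsilon>"
    using \<open>\<epsilon> > 0\<close> \<open>A \<ge> 0\<close> by (simp_all add: e_def field_simps)
  obtain d where "d > 0"
    and remainder: "\<And>y. norm y < d \<Longrightarrow> norm (grad (x + y) - grad x - H *v y) \<le> e * norm y"
    using gderiv \<open>e > 0\<close> unfolding has_derivative_at_alt by (metis add_diff_cancel_left')
  define \<delta> where "\<delta> = d / (norm u + norm v + 1)"
  have "\<delta> > 0" using \<open>d > 0\<close> by (simp add: \<delta>_def add_nonneg_pos)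
  moreover have "h * (norm u + norm v) < d" if "0 < h" "h < \<delta>" for h
  proof -
    have "h * (norm u + norm v) \<le> h * (norm u + norm v + 1)" using \<open>0 < h\<close> by simp
    also have "\<dots> < d"
      using \<open>h < \<delta>\<close> pos_less_divide_eq[of "norm u + norm v + 1" h d]
      by (simp add: \<delta>_def add_nonneg_pos)
    finally show ?thesis .
  qed
  ultimately show "\<exists>b>0. \<forall>h>0. h < b \<longrightarrow> \<bar>second_difference f x u v h / h\<^sup>2 - u \<bullet> (H *v v)\<bar> < \<epsilon>"
    using second_difference_estimate[OF fderiv remainder less_imp_le[OF \<open>e > 0\<close>]] \<open>e * A < \<epsilon>\<close>
    unfolding A_def by (meson le_less_trans)
qed

lemma hessian_symmetric:
  fixes f :: "real^'n \<Rightarrow> real"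
  assumes fderiv: "\<And>x. (f has_derivative (\<lambda>h. grad x \<bullet> h)) (at x)"
    and gderiv: "(grad has_derivative (\<lambda>h. H *v h)) (at x)"
  shows "u \<bullet> (H *v v) = v \<bullet> (H *v u)"
proof (rule tendsto_unique[OF trivial_limit_at_right_real])
  show "((\<lambda>h. second_difference f x u v h / h\<^sup>2) \<longlongrightarrow> u \<bullet> (H *v v)) (at_right 0)"
    by (rule second_difference_tendsto[OF fderiv gderiv])
  show "((\<lambda>h. second_difference f x u v h / h\<^sup>2) \<longlongrightarrow> v \<bullet> (H *v u)) (at_right 0)"
    unfolding second_difference_commute[of f x u v] by (rule second_difference_tendsto[OF fderiv gderiv])
qed

lemma inner_principal_eigenvector:
  fixes A :: "real^'n^'n"
  assumes "\<forall>i. i \<notin> J \<longrightarrow> y $ i = 0" and "\<forall>i\<in>J. (A *v v) $ i = \<mu> * v $ i"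
  shows "y \<bullet> (A *v v) = \<mu> * (y \<bullet> v)"
proof -
  have componentwise: "y $ i * (A *v v) $ i = \<mu> * (y $ i * v $ i)" for i
    using assms by (metis mult.left_commute mult_zero_left)
  show ?thesis unfolding inner_vec_def inner_real_def sum_distrib_left componentwise ..
qed

lemma finite_principal_eigenvalues:
  fixes A :: "real^'n^'n"
  assumes sym: "\<And>u v. u \<bullet> (A *v v) = v \<bullet> (A *v u)"
  shows "finite (principal_eigenvalues A J)"
proof -
  let ?E = "principal_eigenvalues A J"
  define eigvec where "eigvec \<mu> v \<longleftrightarrow> v \<noteq> 0 \<and> (\<forall>i. i \<notin> J \<longrightarrow> v $ i = 0) \<and>
                        (\<forall>i\<in>J. (A *v v) $ i = \<mu> * v $ i)" for \<mu> v
  define V where "V \<mu> = (SOME v. eigvec \<mu> v)" for \<mu>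
  have V: "eigvec \<mu> (V \<mu>)" if "\<mu> \<in> ?E" for \<mu>
    using that unfolding V_def principal_eigenvalues_def eigvec_def[symmetric] by (auto intro: someI_ex)
  have orth: "V \<mu> \<bullet> V \<mu>' = 0" if "\<mu> \<in> ?E" "\<mu>' \<in> ?E" "\<mu> \<noteq> \<mu>'" for \<mu> \<mu>'
  proof -
    have "\<mu> * (V \<mu>' \<bullet> V \<mu>) = V \<mu>' \<bullet> (A *v V \<mu>)"
      using V[OF that(1)] V[OF that(2)] unfolding eigvec_def
      by (metis inner_principal_eigenvector)
    also have "\<dots> = V \<mu> \<bullet> (A *v V \<mu>')" by (rule sym)
    also have "\<dots> = \<mu>' * (V \<mu> \<bullet> V \<mu>')"
      using V[OF that(1)] V[OF that(2)] unfolding eigvec_def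
      by (metis inner_principal_eigenvector)
    finally show ?thesis using that(3) by (simp add: inner_commute)
  qed
  have "inj_on V ?E"
  proof (rule inj_onI, rule ccontr)
    fix \<mu> \<mu>' assume "\<mu> \<in> ?E" "\<mu>' \<in> ?E" "V \<mu> = V \<mu>'" "\<mu> \<noteq> \<mu>'"
    then have "V \<mu> \<bullet> V \<mu> = 0" by (metis orth)
    with V[OF \<open>\<mu> \<in> ?E\<close>] show False unfolding eigvec_def by simp
  qed
  moreover have "independent (V ` ?E)"
    using orth V by (intro pairwise_orthogonal_independent)
      (auto simp: pairwise_def orthogonal_def eigvec_def)
  then have "finite (V ` ?E)" using independent_bound by blast
  ultimately show ?thesis using finite_imageD by blast
qed

lemma linear_term_zero_if_quadratic_nonneg:
  fixes a c :: real
  assumes nonneg: "\<And>e. 0 \<le> 2 * e * a + e\<^sup>2 * c"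
  shows "a = 0"
proof (rule ccontr)
  assume "a \<noteq> 0"
  have "c \<ge> 0" using nonneg[of 1] nonneg[of "-1"] by simp
  define e where "e = - a / (c + 1)"
  have "2 * e * a + e\<^sup>2 * c = a\<^sup>2 * (- c - 2) / (c + 1)\<^sup>2"
    using \<open>c \<ge> 0\<close> unfolding e_def by (simp add: divide_simps power2_eq_square) algebra
  also have "\<dots> < 0"
    using \<open>a \<noteq> 0\<close> \<open>c \<ge> 0\<close> by (intro divide_neg_pos mult_pos_neg) auto
  finally show False using nonneg[of e] by simp
qed

lemma supported_quadratic_form_attains_min:
  fixes A :: "real^'n^'n"
  assumes "J \<noteq> {}"
  obtains v where "norm v = 1" "\<forall>i. i \<notin> J \<longrightarrow> v $ i = 0"
    and "\<And>y. \<forall>i. i \<notin> J \<longrightarrow> y $ i = 0 \<Longrightarrow> (v \<bullet> (A *v v)) * (norm y)\<^sup>2 \<le> y \<bullet> (A *v y)"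
proof -
  define S where "S = {x::real^'n. norm x = 1 \<and> (\<forall>i. i \<notin> J \<longrightarrow> x $ i = 0)}"
  have "closed S" unfolding S_def
    by (intro closed_Collect_conj closed_Collect_eq closed_Collect_all closed_Collect_imp)
      (auto intro!: continuous_intros)
  moreover have "bounded S" unfolding S_def bounded_iff by auto
  ultimately have "compact S" by (simp add: compact_eq_bounded_closed)
  obtain j where "j \<in> J" using assms by auto
  then have "axis j 1 \<in> S" unfolding S_def by (auto simp: norm_axis_1) (auto simp: axis_def)
  then have "S \<noteq> {}" by auto
  moreover have "continuous_on S (\<lambda>x. x \<bullet> (A *v x))" by (intro continuous_intros)
  ultimately obtain v where "v \<in> S" and min: "\<And>y. y \<in> S \<Longrightarrow> v \<bullet> (A *v v) \<le> y \<bullet> (A *v y)"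
    using continuous_attains_inf[OF \<open>compact S\<close>] by metis
  show ?thesis
  proof (rule that)
    show "norm v = 1" "\<forall>i. i \<notin> J \<longrightarrow> v $ i = 0" using \<open>v \<in> S\<close> by (auto simp: S_def)
    fix y :: "real^'n" assume y: "\<forall>i. i \<notin> J \<longrightarrow> y $ i = 0"
    show "(v \<bullet> (A *v v)) * (norm y)\<^sup>2 \<le> y \<bullet> (A *v y)"
    proof (cases "y = 0")
      case False
      then have "(1 / norm y) *\<^sub>R y \<in> S" using y by (auto simp: S_def)
      from min[OF this] False show ?thesis
        by (simp add: matrix_vector_mult_scaleR power2_eq_square field_simps)
    qed simp
  qed
qed

lemma supported_quadratic_minimizer_is_eigenvector:
  fixes A :: "real^'n^'n"
  assumes sym: "\<And>u v. u \<bullet> (A *v v) = v \<bullet> (A *v u)"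
    and v: "\<forall>i. i \<notin> J \<longrightarrow> v $ i = 0" "v \<bullet> (A *v v) = \<mu> * (norm v)\<^sup>2"
    and min: "\<And>y. \<forall>i. i \<notin> J \<longrightarrow> y $ i = 0 \<Longrightarrow> \<mu> * (norm y)\<^sup>2 \<le> y \<bullet> (A *v y)"
    and "i \<in> J"
  shows "(A *v v) $ i = \<mu> * v $ i"
proof -
  define q where "q y = y \<bullet> (A *v y) - \<mu> * (y \<bullet> y)" for y
  define u :: "real^'n" where "u = axis i 1"
  have u: "\<forall>k. k \<notin> J \<longrightarrow> u $ k = 0" using \<open>i \<in> J\<close> by (auto simp: u_def axis_def)
  have "v \<bullet> (A *v v) = \<mu> * (v \<bullet> v)" using v(2) by (simp add: power2_norm_eq_inner)
  then have "q (v + e *\<^sub>R u) = 2 * e * (u \<bullet> (A *v v) - \<mu> * (u \<bullet> v)) + e\<^sup>2 * q u" for e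
    using sym[of v u]
    by (simp add: q_def matrix_vector_right_distrib matrix_vector_mult_scaleR inner_add_left
        inner_add_right inner_commute[of v u] power2_norm_eq_inner power2_eq_square algebra_simps)
  moreover have "q (v + e *\<^sub>R u) \<ge> 0" for e
    using min[of "v + e *\<^sub>R u"] u v(1) by (simp add: q_def power2_norm_eq_inner)
  ultimately have "u \<bullet> (A *v v) - \<mu> * (u \<bullet> v) = 0"
    by (intro linear_term_zero_if_quadratic_nonneg[where c = "q u"]) metis
  then show ?thesis by (simp add: u_def inner_axis')
qed

lemma lambda_min_le_quadratic_form:
  fixes A :: "real^'n^'n"
  assumes sym: "\<And>u v. u \<bullet> (A *v v) = v \<bullet> (A *v u)" and "J \<noteq> {}"
    and x: "\<forall>i. i \<notin> J \<longrightarrow> x $ i = 0"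
  shows "lambda_min A J * (norm x)\<^sup>2 \<le> x \<bullet> (A *v x)"
proof -
  obtain v where v: "norm v = 1" "\<forall>i. i \<notin> J \<longrightarrow> v $ i = 0"
    and min: "\<And>y. \<forall>i. i \<notin> J \<longrightarrow> y $ i = 0 \<Longrightarrow> (v \<bullet> (A *v v)) * (norm y)\<^sup>2 \<le> y \<bullet> (A *v y)"
    using supported_quadratic_form_attains_min[OF \<open>J \<noteq> {}\<close>] by blast
  define \<mu> where "\<mu> = v \<bullet> (A *v v)"
  have "\<mu> \<in> principal_eigenvalues A J"
    unfolding principal_eigenvalues_def
    using v min supported_quadratic_minimizer_is_eigenvector[OF sym v(2), of \<mu>]
    by (intro CollectI exI[of _ v]) (auto simp: \<mu>_def)
  moreover have "\<mu> \<le> \<mu>'" if \<mu>': "\<mu>' \<in> principal_eigenvalues A J" for \<mu>'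
  proof -
    obtain w where w: "w \<noteq> 0" "\<forall>i. i \<notin> J \<longrightarrow> w $ i = 0" "\<forall>i\<in>J. (A *v w) $ i = \<mu>' * w $ i"
      using \<mu>' unfolding principal_eigenvalues_def by auto
    have "\<mu> * (norm w)\<^sup>2 \<le> \<mu>' * (norm w)\<^sup>2"
      using min[OF w(2)] inner_principal_eigenvector[OF w(2,3)]
      by (simp add: \<mu>_def power2_norm_eq_inner)
    with w(1) show ?thesis by simp
  qed
  ultimately have "lambda_min A J = \<mu>"
    unfolding lambda_min_def by (intro Min_eqI finite_principal_eigenvalues sym)
  with min[OF x] show ?thesis by (simp add: \<mu>_def)
qed

definition soft_threshold :: "real \<Rightarrow> real^'n \<Rightarrow> real^'n" where
  "soft_threshold c z = (\<chi> i. if z $ i > c then z $ i - c else if z $ i < - c then z $ i + c else 0)"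

lemma subdiff_l1I:
  fixes s x :: "real^'n"
  assumes "\<And>i. s $ i * x $ i = \<bar>x $ i\<bar> \<and> \<bar>s $ i\<bar> \<le> 1"
  shows "s \<in> subdiff_l1 x"
  unfolding subdiff_l1_def
proof (intro CollectI allI)
  fix y :: "real^'n"
  have "s $ i * (y $ i - x $ i) \<le> \<bar>y $ i\<bar> - \<bar>x $ i\<bar>" for i
  proof -
    have "s $ i * y $ i \<le> \<bar>s $ i\<bar> * \<bar>y $ i\<bar>" by (metis abs_ge_self abs_mult)
    also have "\<dots> \<le> \<bar>y $ i\<bar>" using assms[of i] by (simp add: mult_left_le_one_le)
    finally show ?thesis using assms[of i] by (simp add: right_diff_distrib)
  qed
  then have "(\<Sum>i\<in>UNIV. s $ i * (y $ i - x $ i)) \<le> (\<Sum>i\<in>UNIV. \<bar>y $ i\<bar> - \<bar>x $ i\<bar>)"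
    by (intro sum_mono)
  then show "l1norm x + s \<bullet> (y - x) \<le> l1norm y"
    unfolding l1norm_def inner_vec_def by (simp add: sum_subtractf)
qed

lemma soft_threshold_subgradient:
  assumes "c > 0"
  shows "(1 / c) *\<^sub>R (z - soft_threshold c z) \<in> subdiff_l1 (soft_threshold c z)"
  using assms by (intro subdiff_l1I) (auto simp: soft_threshold_def abs_if field_simps)

lemma prox_l1_strong_minimizer:
  fixes x z :: "real^'n"
  assumes "c > 0" and "(1 / c) *\<^sub>R (z - x) \<in> subdiff_l1 x"
  shows "c * l1norm x + (1/2) * (norm (x - z))\<^sup>2 + (1/2) * (norm (y - x))\<^sup>2
           \<le> c * l1norm y + (1/2) * (norm (y - z))\<^sup>2"
proof -
  have "l1norm x + ((1 / c) *\<^sub>R (z - x)) \<bullet> (y - x) \<le> l1norm y"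
    using assms(2) unfolding subdiff_l1_def by blast
  then have "c * (l1norm x + ((1 / c) *\<^sub>R (z - x)) \<bullet> (y - x)) \<le> c * l1norm y"
    using \<open>c > 0\<close> by (intro mult_left_mono) auto
  then have "c * l1norm x + (z - x) \<bullet> (y - x) \<le> c * l1norm y"
    using \<open>c > 0\<close> by (simp add: distrib_left)
  moreover have "(norm (y - z))\<^sup>2 = (norm ((y - x) + (x - z)))\<^sup>2" by simp
  then have "(norm (y - z))\<^sup>2 = (norm (y - x))\<^sup>2 + 2 * ((y - x) \<bullet> (x - z)) + (norm (x - z))\<^sup>2"
    by (simp only: power2_norm_eq_inner inner_add_left inner_add_right inner_commute[of "x - z" "y - x"])
  moreover have "(y - x) \<bullet> (x - z) = - ((z - x) \<bullet> (y - x))"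
    by (metis inner_commute inner_minus_right minus_diff_eq)
  ultimately show ?thesis by linarith
qed

lemma prox_l1_eq_soft_threshold:
  fixes z :: "real^'n"
  assumes "c > 0"
  shows "prox (\<lambda>y. c * l1norm y) z = soft_threshold c z"
proof -
  define x where "x = soft_threshold c z"
  define F where "F y = c * l1norm y + (1/2) * (norm (y - z))\<^sup>2" for y :: "real^'n"
  have strong: "F x + (1/2) * (norm (y - x))\<^sup>2 \<le> F y" for y
    using prox_l1_strong_minimizer[OF assms soft_threshold_subgradient[OF assms]]
    by (simp add: F_def x_def)
  \<comment> \<open>prox picks some minimizer; the quadratic growth in strong makes the choice unique.\<close>
  have "prox (\<lambda>y. c * l1norm y) z = (SOME p. \<forall>y. F p \<le> F y)"
    unfolding prox_def F_def ..
  also have "\<dots> = x"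
  proof (rule some_equality)
    show "\<forall>y. F x \<le> F y"
    proof
      fix y show "F x \<le> F y" using strong[of y] zero_le_power2[of "norm (y - x)"] by linarith
    qed
    fix p assume "\<forall>y. F p \<le> F y"
    then have "F p \<le> F x" by blast
    then have "(norm (p - x))\<^sup>2 \<le> 0" using strong[of p] by linarith
    then show "p = x" by simp
  qed
  finally show ?thesis by (simp add: x_def)
qed

lemma prox_grad_map_subgradient:
  fixes grad :: "real^'n \<Rightarrow> real^'n" and x :: "real^'n"
  assumes "lam > 0" "t > 0"
  defines "G \<equiv> prox_grad_map grad lam t x"
  shows "(1 / lam) *\<^sub>R (G - grad x) \<in> subdiff_l1 (x - (1 / t) *\<^sub>R G)"
proof -
  define z where "z = x - (1 / t) *\<^sub>R grad x"
  have "lam / t > 0" using assms by simp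
  have "x - (1 / t) *\<^sub>R G = soft_threshold (lam / t) z"
    using \<open>t > 0\<close> prox_l1_eq_soft_threshold[OF \<open>lam / t > 0\<close>]
    by (simp add: G_def prox_grad_map_def z_def)
  moreover have "(1 / (lam / t)) *\<^sub>R (z - (x - (1 / t) *\<^sub>R G)) = (1 / lam) *\<^sub>R (G - grad x)"
    using assms by (simp add: z_def algebra_simps)
  ultimately show ?thesis
    using soft_threshold_subgradient[OF \<open>lam / t > 0\<close>, of z] by simp
qed

lemma subdiff_l1_closed_graph:
  fixes p s :: "nat \<Rightarrow> real^'n"
  assumes "p \<longlonglongrightarrow> p0" "s \<longlonglongrightarrow> s0" "\<And>k. s k \<in> subdiff_l1 (p k)"
  shows "s0 \<in> subdiff_l1 p0"
  unfolding subdiff_l1_def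
proof (intro CollectI allI)
  fix y
  have "continuous_on UNIV (l1norm :: real^'n \<Rightarrow> real)"
    unfolding l1norm_def by (intro continuous_intros)
  then have "(\<lambda>k. l1norm (p k) + s k \<bullet> (y - p k)) \<longlonglongrightarrow> l1norm p0 + s0 \<bullet> (y - p0)"
    using assms(1,2) by (intro tendsto_intros) (auto intro: continuous_on_tendsto_compose)
  moreover have "l1norm (p k) + s k \<bullet> (y - p k) \<le> l1norm y" for k
    using assms(3)[of k] unfolding subdiff_l1_def by blast
  ultimately show "l1norm p0 + s0 \<bullet> (y - p0) \<le> l1norm y"
    by (intro tendsto_le[OF trivial_limit_sequentially tendsto_const]) auto
qed

lemma stationary_limit_of_prox_grad:
  fixes grad :: "real^'n \<Rightarrow> real^'n" and w :: "nat \<Rightarrow> real^'n"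
  assumes "lam > 0" and "continuous_on UNIV grad"
    and w_lim: "w \<longlonglongrightarrow> wstar" and "0 < tmin" "\<And>k. tmin \<le> t k"
    and G_lim: "(\<lambda>k. prox_grad_map grad lam (t k) (w k)) \<longlonglongrightarrow> 0"
  shows "\<exists>s\<in>subdiff_l1 wstar. grad wstar + lam *\<^sub>R s = 0"
proof
  define G where "G k = prox_grad_map grad lam (t k) (w k)" for k
  have "t k > 0" for k using assms(4) assms(5)[of k] by linarith
  have "(\<lambda>k. (1 / t k) *\<^sub>R G k) \<longlonglongrightarrow> 0"
  proof (rule Lim_null_comparison)
    show "\<forall>\<^sub>F k in sequentially. norm ((1 / t k) *\<^sub>R G k) \<le> norm (G k) / tmin"
    proof (intro always_eventually allI)
      fix k
      have "norm (G k) / t k \<le> norm (G k) / tmin"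
        using assms(4) assms(5)[of k] \<open>t k > 0\<close> by (intro divide_left_mono) auto
      then show "norm ((1 / t k) *\<^sub>R G k) \<le> norm (G k) / tmin"
        using \<open>t k > 0\<close> by simp
    qed
    show "(\<lambda>k. norm (G k) / tmin) \<longlonglongrightarrow> 0"
      using tendsto_divide_zero[OF tendsto_norm_zero[OF G_lim]] by (simp add: G_def)
  qed
  with w_lim have p_lim: "(\<lambda>k. w k - (1 / t k) *\<^sub>R G k) \<longlonglongrightarrow> wstar"
    using tendsto_diff by fastforce
  have "(\<lambda>k. grad (w k)) \<longlonglongrightarrow> grad wstar"
    by (rule continuous_on_tendsto_compose[OF assms(2) w_lim]) auto
  then have s_lim: "(\<lambda>k. (1 / lam) *\<^sub>R (G k - grad (w k))) \<longlonglongrightarrow> (1 / lam) *\<^sub>R (0 - grad wstar)"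
    using G_lim unfolding G_def by (intro tendsto_scaleR tendsto_const tendsto_diff)
  show "(1 / lam) *\<^sub>R (0 - grad wstar) \<in> subdiff_l1 wstar"
    by (rule subdiff_l1_closed_graph[OF p_lim s_lim])
      (simp add: G_def prox_grad_map_subgradient[OF \<open>lam > 0\<close> \<open>t _ > 0\<close>])
  show "grad wstar + lam *\<^sub>R ((1 / lam) *\<^sub>R (0 - grad wstar)) = 0"
    using \<open>lam > 0\<close> by simp
qed

lemma eventually_support_subset:
  fixes w :: "nat \<Rightarrow> real^'n"
  assumes "w \<longlonglongrightarrow> wstar"
  shows "\<forall>\<^sub>F k in sequentially. support wstar \<subseteq> support (w k)"
proof -
  have "\<forall>\<^sub>F k in sequentially. \<forall>i. wstar $ i \<noteq> 0 \<longrightarrow> w k $ i \<noteq> 0"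
  proof (rule eventually_all_finite)
    fix i
    show "\<forall>\<^sub>F k in sequentially. wstar $ i \<noteq> 0 \<longrightarrow> w k $ i \<noteq> 0"
      using tendsto_imp_eventually_ne[OF tendsto_vec_nth[OF assms]]
      by (cases "wstar $ i = 0") auto
  qed
  then show ?thesis by (simp add: support_def subset_iff)
qed

lemma hessian_nonneg_on_critical_cone_of_limit:
  fixes w :: "nat \<Rightarrow> real^'n" and hess :: "real^'n \<Rightarrow> real^'n^'n"
  assumes sym: "\<And>x u v. u \<bullet> (hess x *v v) = v \<bullet> (hess x *v u)"
    and "continuous_on UNIV hess" and w_lim: "w \<longlonglongrightarrow> wstar" and "eh \<longlonglongrightarrow> 0"
    and second_order: "\<And>k. support (w k) \<noteq> {} \<Longrightarrow> lambda_min (hess (w k)) (support (w k)) \<ge> - eh k"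
    and z: "z \<in> critical_cone wstar"
  shows "z \<bullet> (hess wstar *v z) \<ge> 0"
proof (cases "z = 0")
  case False
  then obtain j where "z $ j \<noteq> 0" by (metis vec_eq_iff zero_index)
  have bound: "- eh k * (norm z)\<^sup>2 \<le> z \<bullet> (hess (w k) *v z)"
    if "support wstar \<subseteq> support (w k)" for k
  proof -
    have z_supp: "\<forall>i. i \<notin> support (w k) \<longrightarrow> z $ i = 0"
      using that z by (auto simp: support_def critical_cone_def)
    with \<open>z $ j \<noteq> 0\<close> have "support (w k) \<noteq> {}" by blast
    then have "- eh k * (norm z)\<^sup>2 \<le> lambda_min (hess (w k)) (support (w k)) * (norm z)\<^sup>2"
      using second_order by (intro mult_right_mono) auto
    also have "\<dots> \<le> z \<bullet> (hess (w k) *v z)"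
      by (rule lambda_min_le_quadratic_form[OF sym \<open>support (w k) \<noteq> {}\<close> z_supp])
    finally show ?thesis .
  qed
  have "(\<lambda>k. hess (w k)) \<longlonglongrightarrow> hess wstar"
    by (rule continuous_on_tendsto_compose[OF assms(2) w_lim]) auto
  then have "(\<lambda>k. z \<bullet> (hess (w k) *v z)) \<longlonglongrightarrow> z \<bullet> (hess wstar *v z)"
    unfolding inner_vec_def matrix_vector_mult_def by (intro tendsto_intros)
  moreover have "(\<lambda>k. - eh k * (norm z)\<^sup>2) \<longlonglongrightarrow> - 0 * (norm z)\<^sup>2"
    by (intro tendsto_intros assms(4))
  moreover have "\<forall>\<^sub>F k in sequentially. - eh k * (norm z)\<^sup>2 \<le> z \<bullet> (hess (w k) *v z)"
    using eventually_support_subset[OF w_lim] by (rule eventually_mono) (rule bound)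
  ultimately show ?thesis
    using tendsto_le[OF trivial_limit_sequentially] by fastforce
qed simp

theorem lemma1:
  fixes f :: "real^'n \<Rightarrow> real"
    and grad :: "real^'n \<Rightarrow> real^'n"
    and hess :: "real^'n \<Rightarrow> real^'n^'n"
    and lam tmin tmax :: real
    and eg eh t :: "nat \<Rightarrow> real"
    and w :: "nat \<Rightarrow> real^'n"
    and wstar :: "real^'n"
  assumes lam: "lam > 0"
    and fderiv: "\<And>x. (f has_derivative (\<lambda>h. grad x \<bullet> h)) (at x)"
    and gderiv: "\<And>x. (grad has_derivative (\<lambda>h. hess x *v h)) (at x)"
    and hcont: "continuous_on UNIV hess"
    and eg_dec: "decseq eg" and eg_lim: "eg \<longlonglongrightarrow> 0"
    and eh_dec: "decseq eh" and eh_lim: "eh \<longlonglongrightarrow> 0"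
    and w_lim: "w \<longlonglongrightarrow> wstar"
    and tbounds: "0 < tmin" "tmin \<le> tmax" "\<And>k. t k \<in> {tmin..tmax}"
    and first_order: "\<And>k. norm (prox_grad_map grad lam (t k) (w k)) \<le> eg k"
    and second_order: "\<And>k. support (w k) \<noteq> {} \<Longrightarrow>
                          lambda_min (hess (w k)) (support (w k)) \<ge> - eh k"
  shows "(\<exists>s\<in>subdiff_l1 wstar. grad wstar + lam *\<^sub>R s = 0) \<and>
         (\<forall>z\<in>critical_cone wstar. z \<bullet> (hess wstar *v z) \<ge> 0)"
proof
  have "continuous_on UNIV grad"
    by (rule has_derivative_continuous_on) (use gderiv in auto)
  moreover have "(\<lambda>k. prox_grad_map grad lam (t k) (w k)) \<longlonglongrightarrow> 0"
    by (rule Lim_null_comparison[OF _ eg_lim]) (simp add: first_order)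
  moreover have "tmin \<le> t k" for k
    using tbounds(3)[of k] by simp
  ultimately show "\<exists>s\<in>subdiff_l1 wstar. grad wstar + lam *\<^sub>R s = 0"
    using stationary_limit_of_prox_grad[OF lam _ w_lim tbounds(1)] by blast
  show "\<forall>z\<in>critical_cone wstar. z \<bullet> (hess wstar *v z) \<ge> 0"
    using hessian_nonneg_on_critical_cone_of_limit[OF hessian_symmetric[OF fderiv gderiv]
        hcont w_lim eh_lim second_order]
    by blast
qed

end
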